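(* Fix integers $d\ge 2$ and $B\ge 2$. There exists a monotone function $\psi:\mathbb{R}\to\mathbb{R}$ such that for every function $f:[0,1]^d\to\mathbb{R}$ (no continuity assumed) there exists a function $g:\mathbb{R}\to\mathbb{R}$ with $$f(x_1,\ldots,x_d)=g\Big(\sum_{p=1}^d B^{-p}\psi(x_p)\Big)\qquad\text{for all }(x_1,\ldots,x_d)\in[0,1]^d.$$ *)

theory Defs
  imports Complex_Main
begin

end

theory Submission
  imports Defs
begin

(*
  Take psi x = (\<Sum>k. \<lfloor>2^k x\<rfloor> / M^k); it is monotone because every term is. Since
  \<lfloor>2^(k+1) x\<rfloor> - 2\<lfloor>2^k x\<rfloor> is the k-th binary digit b_k x, shifting the series gives
  (1 - 2/M) psi x = (\<Sum>k. b_k x / M^k). Hence B^d (1 - 2/M) \<Sum>p. psi x_p / B^p is a base-M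
  expansion whose k-th coefficient \<Sum>p. b_k x_p B^(d-p) is an integer in [0, d B^d]. For
  M > d B^d + 1 such expansions are unique, and each coefficient is a base-B numeral whose
  digits are the b_k x_p. So the inner sum is injective on the cube and g = f \<circ> (its inverse).
*)

lemma norm_bounded_div_pow_le:
  fixes c :: "nat \<Rightarrow> real"
  assumes "\<bar>c n\<bar> \<le> D" and "1 < M"
  shows "norm (c n / M ^ n) \<le> D * (1 / M) ^ n"
  using assms by (simp add: abs_divide power_divide divide_right_mono)

lemma summable_bounded_div_pow:
  fixes c :: "nat \<Rightarrow> real"
  assumes "\<And>n. \<bar>c n\<bar> \<le> D" and "1 < M"
  shows "summable (\<lambda>n. c n / M ^ n)"
proof (rule summable_comparison_test')
  show "summable (\<lambda>n. D * (1 / M) ^ n)"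
    using assms(2) by (intro summable_mult summable_geometric) auto
  show "norm (c n / M ^ n) \<le> D * (1 / M) ^ n" for n
    using assms by (rule norm_bounded_div_pow_le)
qed

lemma abs_suminf_bounded_div_pow_le:
  fixes c :: "nat \<Rightarrow> real"
  assumes "\<And>n. \<bar>c n\<bar> \<le> D" and M: "1 < M"
  shows "\<bar>\<Sum>n. c n / M ^ n\<bar> \<le> D * M / (M - 1)"
proof -
  have geom: "(\<lambda>n. D * (1 / M) ^ n) sums (D * (1 / (1 - 1 / M)))"
    using M by (intro sums_mult geometric_sums) auto
  have "norm (\<Sum>n. c n / M ^ n) \<le> (\<Sum>n. D * (1 / M) ^ n)"
    using assms geom by (intro norm_suminf_le norm_bounded_div_pow_le) (auto simp: sums_iff)
  also have "\<dots> = D * M / (M - 1)"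
    using geom M by (simp add: sums_iff field_simps)
  finally show ?thesis by simp
qed

lemma bounded_int_series_eq_zero:
  fixes c :: "nat \<Rightarrow> int" and D M :: real
  assumes bound: "\<And>n. \<bar>of_int (c n)\<bar> \<le> D" and M: "D + 1 < M"
    and zero: "(\<Sum>n. of_int (c n) / M ^ n) = 0"
  shows "c k = 0"
proof (induction k rule: less_induct)
  case (less k)
  have "0 \<le> D" using bound[of 0] by linarith
  then have M1: "1 < M" using M by linarith
  define f where "f = (\<lambda>n. of_int (c n) / M ^ n)"
  have "summable f"
    unfolding f_def using bound M1 by (rule summable_bounded_div_pow)
  moreover have "sum f {..<k} = 0"
    using less by (simp add: f_def)
  moreover have "suminf f = 0"
    using zero by (simp only: f_def)
  ultimately have "(\<Sum>n. f (n + k)) = 0"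
    using suminf_split_initial_segment[of f k] by simp
  moreover have "(\<lambda>n. f (n + k)) = (\<lambda>n. of_int (c (n + k)) / M ^ n / M ^ k)"
    by (simp add: f_def power_add)
  moreover have tail_summable: "summable (\<lambda>n. of_int (c (n + k)) / M ^ n)"
    using bound M1 by (rule summable_bounded_div_pow)
  ultimately have "(\<Sum>n. of_int (c (n + k)) / M ^ n) = 0"
    using M1 by (simp only: suminf_divide) simp
  then have "of_int (c k) = - (\<Sum>n. of_int (c (Suc n + k)) / M ^ Suc n)"
    using suminf_split_head[OF tail_summable] by simp
  also have "\<dots> = - (\<Sum>n. of_int (c (Suc n + k)) / M ^ n) / M"
  proof -
    have "summable (\<lambda>n. of_int (c (Suc n + k)) / M ^ n)"
      using bound M1 by (rule summable_bounded_div_pow)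
    from suminf_divide[OF this, of M] show ?thesis
      by (simp add: field_simps)
  qed
  finally have "\<bar>of_int (c k)\<bar> = \<bar>\<Sum>n. of_int (c (Suc n + k)) / M ^ n\<bar> / M"
    using M1 by simp
  also have "\<dots> \<le> D * M / (M - 1) / M"
    using abs_suminf_bounded_div_pow_le[OF bound M1] M1 by (intro divide_right_mono) auto
  also have "\<dots> = D / (M - 1)"
    using M1 by simp
  also have "\<dots> < 1"
    using M M1 by (simp add: divide_less_eq)
  finally show "c k = 0"
    by linarith
qed

lemma bounded_int_series_unique:
  fixes a b :: "nat \<Rightarrow> int" and D :: int and M :: real
  assumes bounds: "\<And>n. 0 \<le> a n \<and> a n \<le> D \<and> 0 \<le> b n \<and> b n \<le> D"
    and M: "of_int D + 1 < M"
    and eq: "(\<Sum>n. of_int (a n) / M ^ n) = (\<Sum>n. of_int (b n) / M ^ n)"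
  shows "a = b"
proof
  fix k
  have "0 \<le> D" using bounds[of 0] by simp
  then have M1: "1 < M" using M by linarith
  have a_bound: "\<bar>of_int (a n)\<bar> \<le> real_of_int D"
    and b_bound: "\<bar>of_int (b n)\<bar> \<le> real_of_int D"
    and diff_bound: "\<bar>of_int (a n - b n)\<bar> \<le> real_of_int D" for n
    using bounds[of n] by auto
  have "summable (\<lambda>n. of_int (a n) / M ^ n)" "summable (\<lambda>n. of_int (b n) / M ^ n)"
    using summable_bounded_div_pow[OF a_bound M1] summable_bounded_div_pow[OF b_bound M1] .
  from suminf_diff[OF this] have "(\<Sum>n. of_int (a n - b n) / M ^ n) = 0"
    using eq by (simp add: diff_divide_distrib)
  then have "a k - b k = 0"
    using diff_bound M by (rule bounded_int_series_eq_zero[rotated 2])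
  then show "a k = b k" by simp
qed

lemma base_digits_unique:
  fixes a b :: "nat \<Rightarrow> int" and B :: int
  assumes "0 < B"
    and "\<forall>p\<in>{1..n}. 0 \<le> a p \<and> a p < B \<and> 0 \<le> b p \<and> b p < B"
    and "(\<Sum>p=1..n. a p * B ^ (n - p)) = (\<Sum>p=1..n. b p * B ^ (n - p))"
  shows "\<forall>p\<in>{1..n}. a p = b p"
  using assms(2,3)
proof (induction n)
  case 0
  then show ?case by simp
next
  case (Suc n)
  have horner: "(\<Sum>p=1..Suc n. c p * B ^ (Suc n - p)) = B * (\<Sum>p=1..n. c p * B ^ (n - p)) + c (Suc n)"
    for c :: "nat \<Rightarrow> int"
    by (simp add: sum_distrib_left Suc_diff_le mult.left_commute)
  have last: "0 \<le> a (Suc n)" "a (Suc n) < B" "0 \<le> b (Suc n)" "b (Suc n) < B"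
    using Suc.prems(1) by auto
  have eq: "B * (\<Sum>p=1..n. a p * B ^ (n - p)) + a (Suc n)
      = B * (\<Sum>p=1..n. b p * B ^ (n - p)) + b (Suc n)"
    using Suc.prems(2) by (simp only: horner)
  then have "(B * (\<Sum>p=1..n. a p * B ^ (n - p)) + a (Suc n)) mod B
      = (B * (\<Sum>p=1..n. b p * B ^ (n - p)) + b (Suc n)) mod B"
    by simp
  then have a_last: "a (Suc n) = b (Suc n)"
    using last by simp
  then have "(\<Sum>p=1..n. a p * B ^ (n - p)) = (\<Sum>p=1..n. b p * B ^ (n - p))"
    using eq assms(1) by simp
  moreover have "\<forall>p\<in>{1..n}. 0 \<le> a p \<and> a p < B \<and> 0 \<le> b p \<and> b p < B"
    using Suc.prems(1) by simp
  ultimately have "\<forall>p\<in>{1..n}. a p = b p"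
    using Suc.IH by blast
  then show ?case
    using a_last by (metis atLeastAtMost_iff le_Suc_eq)
qed

definition psi :: "real \<Rightarrow> real \<Rightarrow> real" where
  "psi M x = (\<Sum>k. of_int \<lfloor>2 ^ k * x\<rfloor> / M ^ k)"

text \<open>On [0, 1], digit 0 is the integer part (1 only at x = 1), digit k > 0 the k-th binary digit.\<close>

fun binary_digit :: "real \<Rightarrow> nat \<Rightarrow> int" where
  "binary_digit x 0 = \<lfloor>x\<rfloor>"
| "binary_digit x (Suc k) = \<lfloor>2 ^ Suc k * x\<rfloor> - 2 * \<lfloor>2 ^ k * x\<rfloor>"

lemma summable_floor_pow2_div_pow:
  fixes M x :: real
  assumes "2 < M"
  shows "summable (\<lambda>k. of_int \<lfloor>2 ^ k * x\<rfloor> / M ^ k)"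
proof (rule summable_comparison_test')
  show "summable (\<lambda>k. (\<bar>x\<bar> + 1) * (2 / M) ^ k)"
    using assms by (intro summable_mult summable_geometric) auto
  fix k :: nat
  have "\<bar>of_int \<lfloor>2 ^ k * x\<rfloor>\<bar> \<le> \<bar>2 ^ k * x\<bar> + 1"
    using of_int_floor_le[of "2 ^ k * x"] real_of_int_floor_gt_diff_one[of "2 ^ k * x"] by arith
  also have "\<dots> = 2 ^ k * \<bar>x\<bar> + 1"
    by (simp add: abs_mult)
  also have "\<dots> \<le> (\<bar>x\<bar> + 1) * 2 ^ k"
    by (simp add: algebra_simps)
  finally show "norm (of_int \<lfloor>2 ^ k * x\<rfloor> / M ^ k) \<le> (\<bar>x\<bar> + 1) * (2 / M) ^ k"
    using assms by (simp add: abs_divide power_divide divide_right_mono)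
qed

lemma mono_psi:
  assumes "2 < M"
  shows "mono (psi M)"
proof (rule monoI)
  fix x y :: real
  assume "x \<le> y"
  then have "\<lfloor>2 ^ k * x\<rfloor> \<le> \<lfloor>2 ^ k * y\<rfloor>" for k :: nat
    by (intro floor_mono mult_left_mono) auto
  then have "of_int \<lfloor>2 ^ k * x\<rfloor> / M ^ k \<le> of_int \<lfloor>2 ^ k * y\<rfloor> / M ^ k" for k
    using assms by (intro divide_right_mono) auto
  then show "psi M x \<le> psi M y"
    unfolding psi_def using assms by (intro suminf_le summable_floor_pow2_div_pow)
qed

lemma binary_digit_sums:
  fixes M x :: real
  assumes "2 < M"
  shows "(\<lambda>k. of_int (binary_digit x k) / M ^ k) sums ((1 - 2 / M) * psi M x)"
proof -
  define f where "f = (\<lambda>k. of_int \<lfloor>2 ^ k * x\<rfloor> / M ^ k)"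
  have "f sums psi M x"
    unfolding f_def psi_def using assms by (intro summable_sums summable_floor_pow2_div_pow)
  then have "(\<lambda>k. f (Suc k) - 2 / M * f k) sums (psi M x - f 0 - 2 / M * psi M x)"
    by (intro sums_diff sums_mult) (simp_all add: sums_Suc_iff)
  moreover have "f (Suc k) - 2 / M * f k = of_int (binary_digit x (Suc k)) / M ^ Suc k" for k
    using assms by (simp add: f_def field_simps)
  ultimately have "(\<lambda>k. of_int (binary_digit x (Suc k)) / M ^ Suc k)
      sums (psi M x - f 0 - 2 / M * psi M x)"
    by simp
  then have "(\<lambda>k. of_int (binary_digit x k) / M ^ k)
      sums (psi M x - f 0 - 2 / M * psi M x + of_int (binary_digit x 0) / M ^ 0)"
    by (rule sums_Suc)
  then show ?thesis
    by (simp add: f_def algebra_simps)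
qed

lemma binary_digit_bounds:
  assumes "0 \<le> x" and "x \<le> 1"
  shows "0 \<le> binary_digit x k \<and> binary_digit x k \<le> 1"
proof (cases k)
  case 0
  then show ?thesis
    using assms by (simp add: floor_le_iff)
next
  case (Suc j)
  have "2 ^ Suc j * x = 2 * (2 ^ j * x)"
    by simp
  then show ?thesis
    using Suc by (simp only: binary_digit.simps) linarith
qed

lemma floor_pow2_eq_if_binary_digits_eq:
  assumes "\<And>k. binary_digit x k = binary_digit y k"
  shows "\<lfloor>2 ^ k * x\<rfloor> = \<lfloor>2 ^ k * y\<rfloor>"
proof (induction k)
  case 0
  then show ?case using assms[of 0] by simp
next
  case (Suc k)
  then show ?case using assms[of "Suc k"] by simp
qed

lemma binary_digits_eq_imp_eq:
  fixes x y :: real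
  assumes "\<And>k. binary_digit x k = binary_digit y k"
  shows "x = y"
proof (rule ccontr)
  assume "x \<noteq> y"
  then obtain k :: nat where "1 / \<bar>x - y\<bar> < 2 ^ k"
    using real_arch_pow[of 2 "1 / \<bar>x - y\<bar>"] by auto
  then have "1 < \<bar>2 ^ k * x - 2 ^ k * y\<bar>"
    using \<open>x \<noteq> y\<close> by (simp add: divide_less_eq abs_mult flip: right_diff_distrib)
  moreover have "\<lfloor>2 ^ k * x\<rfloor> = \<lfloor>2 ^ k * y\<rfloor>"
    using assms by (rule floor_pow2_eq_if_binary_digits_eq)
  ultimately show False
    by linarith
qed

definition unit_cube :: "nat \<Rightarrow> real list set" where
  "unit_cube d = {xs. length xs = d \<and> (\<forall>x\<in>set xs. 0 \<le> x \<and> x \<le> 1)}"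

definition inner_sum :: "real \<Rightarrow> nat \<Rightarrow> nat \<Rightarrow> real list \<Rightarrow> real" where
  "inner_sum M B d xs = (\<Sum>p=1..d. psi M (xs ! (p - 1)) / real B ^ p)"

definition mixed_digit :: "nat \<Rightarrow> nat \<Rightarrow> real list \<Rightarrow> nat \<Rightarrow> int" where
  "mixed_digit B d xs k = (\<Sum>p=1..d. binary_digit (xs ! (p - 1)) k * int B ^ (d - p))"

lemma unit_cube_nth:
  assumes "xs \<in> unit_cube d" and "p \<in> {1..d}"
  shows "0 \<le> xs ! (p - 1) \<and> xs ! (p - 1) \<le> 1"
  using assms nth_mem[of "p - 1" xs] by (auto simp: unit_cube_def)

lemma mixed_digit_sums:
  fixes M :: real
  assumes M: "2 < M" and B: "0 < B"
  shows "(\<lambda>k. of_int (mixed_digit B d xs k) / M ^ k)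
    sums (real B ^ d * (1 - 2 / M) * inner_sum M B d xs)"
proof -
  have "(\<lambda>k. \<Sum>p=1..d. real B ^ (d - p) * (of_int (binary_digit (xs ! (p - 1)) k) / M ^ k))
      sums (\<Sum>p=1..d. real B ^ (d - p) * ((1 - 2 / M) * psi M (xs ! (p - 1))))"
    using M by (intro sums_sum sums_mult binary_digit_sums)
  moreover have "(\<Sum>p=1..d. real B ^ (d - p) * (of_int (binary_digit (xs ! (p - 1)) k) / M ^ k))
      = of_int (mixed_digit B d xs k) / M ^ k" for k
    by (simp add: mixed_digit_def sum_divide_distrib mult.commute)
  moreover have "real B ^ (d - p) * ((1 - 2 / M) * psi M (xs ! (p - 1)))
      = real B ^ d * (1 - 2 / M) * (psi M (xs ! (p - 1)) / real B ^ p)" if "p \<in> {1..d}" for p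
  proof -
    have "real B ^ d = real B ^ (d - p) * real B ^ p"
      using that by (simp flip: power_add)
    then show ?thesis
      using B by (simp add: field_simps)
  qed
  ultimately show ?thesis
    by (simp add: inner_sum_def sum_distrib_left)
qed

lemma mixed_digit_bounds:
  assumes "xs \<in> unit_cube d" and "0 < B"
  shows "0 \<le> mixed_digit B d xs k \<and> mixed_digit B d xs k \<le> int (d * B ^ d)"
proof -
  have term_bounds: "0 \<le> binary_digit (xs ! (p - 1)) k * int B ^ (d - p)
      \<and> binary_digit (xs ! (p - 1)) k * int B ^ (d - p) \<le> int B ^ d" if "p \<in> {1..d}" for p
  proof -
    have "0 \<le> binary_digit (xs ! (p - 1)) k \<and> binary_digit (xs ! (p - 1)) k \<le> 1"
      using unit_cube_nth[OF assms(1) that] by (intro binary_digit_bounds) auto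
    moreover have "int B ^ (d - p) \<le> int B ^ d"
      using assms(2) by (intro power_increasing) auto
    ultimately show ?thesis
      by (auto intro: order_trans[OF mult_right_mono[of _ 1]])
  qed
  have "mixed_digit B d xs k \<le> of_nat (card {1..d}) * int B ^ d"
    unfolding mixed_digit_def by (rule sum_bounded_above) (use term_bounds in auto)
  moreover have "0 \<le> mixed_digit B d xs k"
    unfolding mixed_digit_def by (rule sum_nonneg) (use term_bounds in auto)
  ultimately show ?thesis
    by simp
qed

lemma inj_on_inner_sum:
  fixes M :: real and B d :: nat
  assumes d: "0 < d" and B: "2 \<le> B" and M: "real (d * B ^ d) + 1 < M"
  shows "inj_on (inner_sum M B d) (unit_cube d)"
proof (rule inj_onI)
  fix xs ys
  assume xs: "xs \<in> unit_cube d" and ys: "ys \<in> unit_cube d"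
    and eq: "inner_sum M B d xs = inner_sum M B d ys"
  have "1 \<le> d * B ^ d"
    using d B by simp
  then have M2: "2 < M"
    using M by linarith
  have "(\<Sum>k. of_int (mixed_digit B d xs k) / M ^ k) = (\<Sum>k. of_int (mixed_digit B d ys k) / M ^ k)"
    using mixed_digit_sums[OF M2, of B d] B eq by (simp add: sums_iff)
  then have mixed_eq: "mixed_digit B d xs = mixed_digit B d ys"
    using mixed_digit_bounds[OF xs] mixed_digit_bounds[OF ys] B M
    by (intro bounded_int_series_unique[where D = "int (d * B ^ d)"]) auto
  have digits_eq: "binary_digit (xs ! (p - 1)) k = binary_digit (ys ! (p - 1)) k"
    if p: "p \<in> {1..d}" for p k
  proof -
    have "\<forall>p\<in>{1..d}. binary_digit (xs ! (p - 1)) k = binary_digit (ys ! (p - 1)) k"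
    proof (rule base_digits_unique[where B = "int B"])
      show "0 < int B"
        using B by simp
      show "\<forall>p\<in>{1..d}. 0 \<le> binary_digit (xs ! (p - 1)) k \<and> binary_digit (xs ! (p - 1)) k < int B
          \<and> 0 \<le> binary_digit (ys ! (p - 1)) k \<and> binary_digit (ys ! (p - 1)) k < int B"
      proof
        fix q
        assume q: "q \<in> {1..d}"
        have "0 \<le> binary_digit (xs ! (q - 1)) k \<and> binary_digit (xs ! (q - 1)) k \<le> 1"
          "0 \<le> binary_digit (ys ! (q - 1)) k \<and> binary_digit (ys ! (q - 1)) k \<le> 1"
          using unit_cube_nth[OF xs q] unit_cube_nth[OF ys q] by (simp_all add: binary_digit_bounds)
        moreover have "2 \<le> int B"
          using B by simp
        ultimately show "0 \<le> binary_digit (xs ! (q - 1)) k \<and> binary_digit (xs ! (q - 1)) k < int B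
          \<and> 0 \<le> binary_digit (ys ! (q - 1)) k \<and> binary_digit (ys ! (q - 1)) k < int B"
          by linarith
      qed
      show "(\<Sum>p=1..d. binary_digit (xs ! (p - 1)) k * int B ^ (d - p))
          = (\<Sum>p=1..d. binary_digit (ys ! (p - 1)) k * int B ^ (d - p))"
        using mixed_eq by (simp add: mixed_digit_def fun_eq_iff)
    qed
    then show ?thesis
      using p by blast
  qed
  show "xs = ys"
  proof (rule nth_equalityI)
    show "length xs = length ys"
      using xs ys by (simp add: unit_cube_def)
    fix i
    assume "i < length xs"
    then have "Suc i \<in> {1..d}"
      using xs by (simp add: unit_cube_def)
    then show "xs ! i = ys ! i"
      using digits_eq[of "Suc i"] by (intro binary_digits_eq_imp_eq) simp
  qed
qed

theorem lemma1:
  fixes d B :: nat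
  assumes "d \<ge> 2" and "B \<ge> 2"
  shows "\<exists>\<psi> :: real \<Rightarrow> real. (mono \<psi> \<or> antimono \<psi>) \<and>
           (\<forall>f :: real list \<Rightarrow> real. \<exists>g :: real \<Rightarrow> real.
              \<forall>xs. length xs = d \<and> (\<forall>x\<in>set xs. 0 \<le> x \<and> x \<le> 1) \<longrightarrow>
                 f xs = g (\<Sum>p=1..d. \<psi> (xs ! (p - 1)) / real B ^ p))"
proof -
  define M where "M = real (d * B ^ d) + 2"
  have inj: "inj_on (inner_sum M B d) (unit_cube d)"
    using assms by (intro inj_on_inner_sum) (auto simp: M_def)
  have mono: "mono (psi M)"
    using assms by (intro mono_psi) (auto simp: M_def)
  show ?thesis
  proof (rule exI[of _ "psi M"], intro conjI allI disjI1)
    fix f :: "real list \<Rightarrow> real"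
    let ?g = "f \<circ> inv_into (unit_cube d) (inner_sum M B d)"
    show "\<exists>g. \<forall>xs. length xs = d \<and> (\<forall>x\<in>set xs. 0 \<le> x \<and> x \<le> 1) \<longrightarrow>
        f xs = g (\<Sum>p=1..d. psi M (xs ! (p - 1)) / real B ^ p)"
    proof (intro exI[of _ ?g] allI impI)
      fix xs :: "real list"
      assume "length xs = d \<and> (\<forall>x\<in>set xs. 0 \<le> x \<and> x \<le> 1)"
      then have "xs \<in> unit_cube d"
        by (simp add: unit_cube_def)
      then show "f xs = ?g (\<Sum>p=1..d. psi M (xs ! (p - 1)) / real B ^ p)"
        using inv_into_f_f[OF inj] by (simp add: inner_sum_def)
    qed
  qed (fact mono)
qed

end
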